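(* For all positive integers $N$ and $W$ there exists a real polynomial $F$ of degree $k$, where $k\le\left\lfloor\frac{16}{7}W^{1/4}\sqrt{N}\right\rfloor+4$, such that \[F(0)>W\sum_{i=1}^N|F(i)|.\] *)

theory Defs
  imports "HOL-Analysis.Analysis" "HOL-Computational_Algebra.Polynomial"
begin

end

theory Submission
  imports Defs
begin

text \<open>
  Let \<open>D\<^sub>n\<close> be the Dirichlet kernel written as a polynomial in \<open>cos t\<close>, so that
  \<open>D\<^sub>n(cos t) sin (t/2) = sin ((n + 1/2) t)\<close> and \<open>D\<^sub>n(1) = 2n + 1\<close>. The polynomial
  \<open>F(x) = D\<^sub>n(1 - 2x/N)\<^sup>4\<close> of degree \<open>4n\<close> has \<open>F(0) = (2n + 1)\<^sup>4\<close>, while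
  writing \<open>1 - 2i/N = cos t\<close> gives \<open>sin\<^sup>2 (t/2) = i/N\<close>, hence \<open>F(i) \<le> N\<^sup>2/i\<^sup>2\<close>
  and \<open>\<Sum>\<^sub>i F(i) \<le> 5/3 N\<^sup>2\<close>. Taking \<open>2n + 1\<close> just above \<open>8/7 root 4 W \<surd>N\<close>
  and using \<open>(8/7)\<^sup>4 \<ge> 5/3\<close> gives \<open>F(0) > 5/3 W N\<^sup>2\<close>.
\<close>

fun chebyshev_poly :: "nat \<Rightarrow> real poly" where
  "chebyshev_poly 0 = 1"
| "chebyshev_poly (Suc 0) = [:0, 1:]"
| "chebyshev_poly (Suc (Suc n)) = [:0, 2:] * chebyshev_poly (Suc n) - chebyshev_poly n"

lemma poly_chebyshev_poly_cos: "poly (chebyshev_poly n) (cos t) = cos (real n * t)"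
proof (induction n rule: chebyshev_poly.induct)
  case (3 n)
  have "cos (real (Suc (Suc n)) * t) = cos (real (Suc n) * t + t)"
    and "cos (real n * t) = cos (real (Suc n) * t - t)"
    by (simp_all add: algebra_simps)
  with 3 show ?case
    by (simp only: chebyshev_poly.simps poly_mult poly_diff cos_add cos_diff) (simp add: algebra_simps)
qed auto

lemma degree_chebyshev_poly_le: "degree (chebyshev_poly n) \<le> n"
proof (induction n rule: chebyshev_poly.induct)
  case (3 n)
  have "degree ([:0, 2:] * chebyshev_poly (Suc n)) \<le> Suc (Suc n)"
    using degree_mult_le[of "[:0, 2:]" "chebyshev_poly (Suc n)"] 3(1) by simp
  with 3(2) show ?case
    by (simp add: degree_diff_le)
qed auto

primrec dirichlet_poly :: "nat \<Rightarrow> real poly" where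
  "dirichlet_poly 0 = 1"
| "dirichlet_poly (Suc n) = dirichlet_poly n + smult 2 (chebyshev_poly (Suc n))"

lemma degree_dirichlet_poly_le: "degree (dirichlet_poly n) \<le> n"
proof (induction n)
  case (Suc n)
  have "degree (smult 2 (chebyshev_poly (Suc n))) \<le> Suc n"
    using degree_chebyshev_poly_le[of "Suc n"] by simp
  with Suc show ?case
    by (simp add: degree_add_le)
qed auto

lemma poly_dirichlet_poly_one: "poly (dirichlet_poly n) 1 = 2 * real n + 1"
  by (induction n) (simp_all add: poly_chebyshev_poly_cos[where t = 0, simplified])

lemma poly_dirichlet_poly_cos_mult_sin:
  "poly (dirichlet_poly n) (cos t) * sin (t / 2) = sin ((real n + 1 / 2) * t)"
proof (induction n)
  case (Suc n)
  have prev: "sin ((real n + 1 / 2) * t) = sin (real (Suc n) * t - t / 2)"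
    and curr: "sin ((real (Suc n) + 1 / 2) * t) = sin (real (Suc n) * t + t / 2)"
    by (simp_all add: algebra_simps)
  have "poly (dirichlet_poly (Suc n)) (cos t) * sin (t / 2)
        = sin ((real n + 1 / 2) * t) + 2 * cos (real (Suc n) * t) * sin (t / 2)"
    using Suc by (simp add: poly_chebyshev_poly_cos algebra_simps)
  also have "\<dots> = sin ((real (Suc n) + 1 / 2) * t)"
    unfolding prev curr sin_add sin_diff by (simp add: algebra_simps)
  finally show ?case .
qed simp

lemma poly_dirichlet_poly_sq_le:
  assumes "-1 \<le> y" "y \<le> 1"
  shows "(poly (dirichlet_poly n) y)\<^sup>2 * (1 - y) \<le> 2"
proof -
  define t where "t = arccos y"
  have cos_t: "cos t = y"
    using assms by (simp add: t_def cos_arccos)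
  have "1 - y = 2 * (sin (t / 2))\<^sup>2"
    using cos_double_sin[of "t / 2"] cos_t by simp
  then have "(poly (dirichlet_poly n) y)\<^sup>2 * (1 - y) = 2 * (poly (dirichlet_poly n) (cos t) * sin (t / 2))\<^sup>2"
    using cos_t by (simp add: power_mult_distrib)
  also have "\<dots> = 2 * (sin ((real n + 1 / 2) * t))\<^sup>2"
    by (simp only: poly_dirichlet_poly_cos_mult_sin)
  also have "\<dots> \<le> 2"
    by (simp add: abs_square_le_1)
  finally show ?thesis .
qed

text \<open>Telescoping against \<open>1/(i - 1/2) - 1/(i + 1/2) \<ge> 1/i\<^sup>2\<close>.\<close>

lemma sum_inverse_squares_le: "1 \<le> N \<Longrightarrow> (\<Sum>i=1..N. 1 / (real i)\<^sup>2) \<le> 5 / 3 - 1 / (real N + 1 / 2)"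
proof (induction N rule: dec_induct)
  case (step N)
  have "(real N + 1 / 2) * (real N + 3 / 2) \<le> (real (Suc N))\<^sup>2"
    by (simp add: power2_eq_square algebra_simps)
  then have "1 / (real (Suc N))\<^sup>2 \<le> 1 / ((real N + 1 / 2) * (real N + 3 / 2))"
    by (intro divide_left_mono mult_pos_pos) auto
  also have "\<dots> = 1 / (real N + 1 / 2) - 1 / (real (Suc N) + 1 / 2)"
    by (simp add: field_simps)
  finally show ?case
    using step.IH by simp
qed simp

definition dirichlet_peak_poly :: "nat \<Rightarrow> nat \<Rightarrow> real poly" where
  "dirichlet_peak_poly N n = (pcompose (dirichlet_poly n) [:1, -2 / real N:]) ^ 4"

lemma poly_dirichlet_peak_poly:
  "poly (dirichlet_peak_poly N n) x = (poly (dirichlet_poly n) (1 - 2 * x / real N)) ^ 4"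
  by (simp add: dirichlet_peak_poly_def poly_pcompose algebra_simps)

lemma degree_dirichlet_peak_poly_le: "degree (dirichlet_peak_poly N n) \<le> 4 * n"
proof -
  have "degree (pcompose (dirichlet_poly n) [:1, -2 / real N:]) \<le> n"
    using degree_dirichlet_poly_le[of n] by (simp add: degree_pcompose)
  then show ?thesis
    unfolding dirichlet_peak_poly_def
    by (metis degree_power_le le_trans mult.commute mult_le_mono2)
qed

lemma poly_dirichlet_peak_poly_zero: "poly (dirichlet_peak_poly N n) 0 = (2 * real n + 1) ^ 4"
  by (simp add: poly_dirichlet_peak_poly poly_dirichlet_poly_one)

lemma poly_dirichlet_peak_poly_le:
  assumes "1 \<le> i" "i \<le> N"
  shows "poly (dirichlet_peak_poly N n) (real i) \<le> (real N)\<^sup>2 / (real i)\<^sup>2"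
proof -
  define y where "y = 1 - 2 * real i / real N"
  have "-1 \<le> y" "y \<le> 1"
    using assms by (auto simp: y_def field_simps)
  then have "(poly (dirichlet_poly n) y)\<^sup>2 * (2 * real i / real N) \<le> 2"
    using poly_dirichlet_poly_sq_le[of y n] by (simp add: y_def)
  then have "(poly (dirichlet_poly n) y)\<^sup>2 \<le> real N / real i"
    using assms by (simp add: field_simps)
  then have "((poly (dirichlet_poly n) y)\<^sup>2)\<^sup>2 \<le> (real N / real i)\<^sup>2"
    by (intro power_mono) auto
  then show ?thesis
    by (simp add: poly_dirichlet_peak_poly y_def power_divide flip: power_mult)
qed

lemma sum_abs_poly_dirichlet_peak_poly_le:
  assumes "1 \<le> N"
  shows "(\<Sum>i=1..N. \<bar>poly (dirichlet_peak_poly N n) (real i)\<bar>) \<le> 5 / 3 * (real N)\<^sup>2"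
proof -
  have "(\<Sum>i=1..N. \<bar>poly (dirichlet_peak_poly N n) (real i)\<bar>) \<le> (\<Sum>i=1..N. (real N)\<^sup>2 * (1 / (real i)\<^sup>2))"
  proof (rule sum_mono)
    fix i assume "i \<in> {1..N}"
    then show "\<bar>poly (dirichlet_peak_poly N n) (real i)\<bar> \<le> (real N)\<^sup>2 * (1 / (real i)\<^sup>2)"
      using poly_dirichlet_peak_poly_le[of i N n]
      by (simp add: poly_dirichlet_peak_poly flip: power_mult)
  qed
  also have "\<dots> = (real N)\<^sup>2 * (\<Sum>i=1..N. 1 / (real i)\<^sup>2)"
    by (simp add: sum_distrib_left)
  also have "\<dots> \<le> (real N)\<^sup>2 * (5 / 3)"
  proof -
    have "0 \<le> 1 / (real N + 1 / 2)"
      by simp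
    with sum_inverse_squares_le[OF assms] have "(\<Sum>i=1..N. 1 / (real i)\<^sup>2) \<le> 5 / 3"
      by linarith
    then show ?thesis
      by (intro mult_left_mono) auto
  qed
  finally show ?thesis
    by simp
qed

theorem lemma4p5:
  fixes N W :: nat
  assumes "N \<ge> 1" and "W \<ge> 1"
  shows "\<exists>F :: real poly.
           int (degree F) \<le> \<lfloor>16 / 7 * root 4 (real W) * sqrt (real N)\<rfloor> + 4 \<and>
           poly F 0 > real W * (\<Sum>i=1..N. \<bar>poly F (real i)\<bar>)"
proof -
  define m where "m = 8 / 7 * root 4 (real W) * sqrt (real N)"
  define n where "n = nat \<lfloor>m / 2\<rfloor> + 1"
  define F where "F = dirichlet_peak_poly N n"
  have m_nonneg: "0 \<le> m"
    by (simp add: m_def)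
  have "int (degree F) \<le> 4 * int n"
    using degree_dirichlet_peak_poly_le[of N n] by (simp add: F_def)
  also have "\<dots> \<le> \<lfloor>2 * m\<rfloor> + 4"
    using m_nonneg by (simp add: n_def le_floor_iff) linarith
  also have "2 * m = 16 / 7 * root 4 (real W) * sqrt (real N)"
    by (simp add: m_def)
  finally have degree_F: "int (degree F) \<le> \<lfloor>16 / 7 * root 4 (real W) * sqrt (real N)\<rfloor> + 4" .
  have "root 4 (real W) ^ 4 = real W"
    by (simp add: real_root_pow_pos2)
  moreover have "sqrt (real N) ^ 4 = (real N)\<^sup>2"
    using power_mult[of "sqrt (real N)" 2 2] by simp
  ultimately have m_pow_4: "m ^ 4 = (8 / 7) ^ 4 * real W * (real N)\<^sup>2"
    unfolding m_def power_mult_distrib by simp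
  have "real W * (\<Sum>i=1..N. \<bar>poly F (real i)\<bar>) \<le> real W * (5 / 3 * (real N)\<^sup>2)"
    unfolding F_def using sum_abs_poly_dirichlet_peak_poly_le[OF assms(1)] by (intro mult_left_mono) auto
  also have "\<dots> \<le> (8 / 7) ^ 4 * (real W * (real N)\<^sup>2)"
  proof -
    have "5 / 3 \<le> (8 / 7 :: real) ^ 4"
      by (simp add: power_divide)
    then show ?thesis
      by (subst mult.left_commute) (intro mult_right_mono, auto)
  qed
  also have "\<dots> = m ^ 4"
    using m_pow_4 by simp
  also have "\<dots> < (2 * real n + 1) ^ 4"
    using m_nonneg by (intro power_strict_mono) (auto simp: n_def, linarith)
  also have "\<dots> = poly F 0"
    by (simp add: F_def poly_dirichlet_peak_poly_zero)
  finally show ?thesis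
    using degree_F by blast
qed

end
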